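(* Let $G$ be a graph and $k\in\mathbb N$. For every finite star $\sigma\subseteq\vec S_k(G)$ with finite interior, the set $S_k^\sigma(G)$ is finite.
   Context: Graphs may be infinite. A separation of $G$ is a set $\{A,B\}$ with $A,B\subseteq V(G)$, $A\cup B=V(G)$ and no edge of $G$ between $A\setminus B$ and $B\setminus A$; its order is $|A\cap B|$. $S_k(G)$ is the set of separations of order $<k$ and $\vec S_k(G)$ the set of their orientations $(A,B)$, $(B,A)$. Oriented separations are ordered by $(A,B)\le(C,D)$ iff $A\subseteq C$ and $B\supseteq D$. A star is a set $\sigma$ of oriented finite-order separations, not containing $(V(G),V(G))$, with $(A,B)\le(D,C)$ for any two distinct $(A,B),(C,D)\in\sigma$; its interior is $\bigcap_{(A,B)\in\sigma}B$. $S_k^\sigma(G)$ is the set of $r\in S_k(G)$ such that for every $\vec s\in\sigma$ some orientation of $r$ is $\ge\vec s$. *)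

theory Defs
  imports Main
begin

definition graph :: "'a set \<Rightarrow> ('a \<times> 'a) set \<Rightarrow> bool" where
  "graph V E \<longleftrightarrow> E \<subseteq> V \<times> V"

definition is_sep :: "'a set \<Rightarrow> ('a \<times> 'a) set \<Rightarrow> 'a set \<Rightarrow> 'a set \<Rightarrow> bool" where
  "is_sep V E A B \<longleftrightarrow> A \<subseteq> V \<and> B \<subseteq> V \<and> A \<union> B = V \<and>
     (\<forall>x y. (x, y) \<in> E \<longrightarrow> \<not> (x \<in> A - B \<and> y \<in> B - A) \<and> \<not> (x \<in> B - A \<and> y \<in> A - B))"

definition sep_lt :: "'a set \<Rightarrow> ('a \<times> 'a) set \<Rightarrow> nat \<Rightarrow> 'a set \<Rightarrow> 'a set \<Rightarrow> bool" where
  "sep_lt V E k A B \<longleftrightarrow> is_sep V E A B \<and> finite (A \<inter> B) \<and> card (A \<inter> B) < k"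

definition S_k :: "'a set \<Rightarrow> ('a \<times> 'a) set \<Rightarrow> nat \<Rightarrow> 'a set set set" where
  "S_k V E k = {{A, B} | A B. sep_lt V E k A B}"

definition oS_k :: "'a set \<Rightarrow> ('a \<times> 'a) set \<Rightarrow> nat \<Rightarrow> ('a set \<times> 'a set) set" where
  "oS_k V E k = {(A, B) | A B. sep_lt V E k A B}"

definition sep_le :: "'a set \<times> 'a set \<Rightarrow> 'a set \<times> 'a set \<Rightarrow> bool" where
  "sep_le s t \<longleftrightarrow> fst s \<subseteq> fst t \<and> snd t \<subseteq> snd s"

definition is_star :: "'a set \<Rightarrow> ('a \<times> 'a) set \<Rightarrow> ('a set \<times> 'a set) set \<Rightarrow> bool" where
  "is_star V E \<sigma> \<longleftrightarrow>
     (\<forall>(A, B) \<in> \<sigma>. is_sep V E A B \<and> finite (A \<inter> B)) \<and>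
     (V, V) \<notin> \<sigma> \<and>
     (\<forall>(A, B) \<in> \<sigma>. \<forall>(C, D) \<in> \<sigma>. (A, B) \<noteq> (C, D) \<longrightarrow> sep_le (A, B) (D, C))"

text \<open>Interior: intersection of the B over (A,B) in sigma (taken inside V, so the empty star has interior V).\<close>
definition interior_star :: "'a set \<Rightarrow> ('a set \<times> 'a set) set \<Rightarrow> 'a set" where
  "interior_star V \<sigma> = V \<inter> \<Inter> (snd ` \<sigma>)"

definition S_k_sigma :: "'a set \<Rightarrow> ('a \<times> 'a) set \<Rightarrow> nat \<Rightarrow> ('a set \<times> 'a set) set \<Rightarrow> 'a set set set" where
  "S_k_sigma V E k \<sigma> = {r \<in> S_k V E k. \<forall>s \<in> \<sigma>. \<exists>A B. r = {A, B} \<and> sep_le s (A, B)}"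

end

theory Submission
  imports Defs
begin

text \<open>Let I be the interior of \<sigma>. A vertex x outside I lies in A - B for some (A,B) \<in> \<sigma>,
  and for any separation {C,D} whose orientations dominate \<sigma>, whether x lies in C or in D
  is decided by which orientation of {C,D} lies above (A,B). Hence {C,D} is determined by
  these orientation choices, finitely many since \<sigma> is finite, together with its traces
  on the finite set I. Neither the graph nor the order bound k plays a role.\<close>

definition nested_pairs :: "'a set \<Rightarrow> ('a set \<times> 'a set) set \<Rightarrow> ('a set \<times> 'a set) set" where
  "nested_pairs V \<sigma> =
     {(C, D). C \<subseteq> V \<and> D \<subseteq> V \<and> (\<forall>s\<in>\<sigma>. sep_le s (C, D) \<or> sep_le s (D, C))}"

lemma mem_iff_sep_le:
  assumes "sep_le s (C, D) \<or> sep_le s (D, C)" and "x \<in> fst s" and "x \<notin> snd s"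
  shows "x \<in> C \<longleftrightarrow> sep_le s (C, D)" and "x \<in> D \<longleftrightarrow> \<not> sep_le s (C, D)"
  using assms by (auto simp: sep_le_def)

lemma inj_on_nested_pairs:
  assumes "\<forall>s\<in>\<sigma>. fst s \<union> snd s = V"
  shows "inj_on (\<lambda>(C, D). ({s\<in>\<sigma>. sep_le s (C, D)}, C \<inter> interior_star V \<sigma>, D \<inter> interior_star V \<sigma>))
           (nested_pairs V \<sigma>)"
    (is "inj_on ?g _")
proof (rule inj_onI, unfold split_paired_all)
  fix C D C' D'
  let ?I = "interior_star V \<sigma>"
  assume CD: "(C, D) \<in> nested_pairs V \<sigma>" and CD': "(C', D') \<in> nested_pairs V \<sigma>"
    and "?g (C, D) = ?g (C', D')"
  then have same_orientations: "{s\<in>\<sigma>. sep_le s (C, D)} = {s\<in>\<sigma>. sep_le s (C', D')}"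
    and same_interior_traces: "C \<inter> ?I = C' \<inter> ?I" "D \<inter> ?I = D' \<inter> ?I"
    by simp_all
  have "(x \<in> C \<longleftrightarrow> x \<in> C') \<and> (x \<in> D \<longleftrightarrow> x \<in> D')" if "x \<in> V" for x
  proof (cases "x \<in> ?I")
    case True
    then show ?thesis
      using same_interior_traces by blast
  next
    case False
    then obtain s where s: "s \<in> \<sigma>" "x \<notin> snd s"
      using \<open>x \<in> V\<close> by (auto simp: interior_star_def)
    then have "x \<in> fst s" using assms \<open>x \<in> V\<close> by blast
    moreover have "sep_le s (C, D) \<longleftrightarrow> sep_le s (C', D')"
      using same_orientations s(1) by blast
    moreover have "sep_le s (C, D) \<or> sep_le s (D, C)" "sep_le s (C', D') \<or> sep_le s (D', C')"
      using CD CD' s(1) by (auto simp: nested_pairs_def)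
    ultimately show ?thesis
      using s(2) mem_iff_sep_le by metis
  qed
  moreover have "C \<subseteq> V" "D \<subseteq> V" "C' \<subseteq> V" "D' \<subseteq> V"
    using CD CD' by (auto simp: nested_pairs_def)
  ultimately show "(C, D) = (C', D')" by blast
qed

lemma finite_nested_pairs:
  assumes "\<forall>s\<in>\<sigma>. fst s \<union> snd s = V" and "finite \<sigma>" and "finite (interior_star V \<sigma>)"
  shows "finite (nested_pairs V \<sigma>)"
proof (rule finite_imageD[OF _ inj_on_nested_pairs[OF assms(1)]])
  let ?I = "interior_star V \<sigma>"
  show "finite ((\<lambda>(C, D). ({s\<in>\<sigma>. sep_le s (C, D)}, C \<inter> ?I, D \<inter> ?I)) ` nested_pairs V \<sigma>)"
    by (rule finite_subset[of _ "Pow \<sigma> \<times> Pow ?I \<times> Pow ?I"]) (use assms in auto)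
qed

lemma S_k_sigma_subset_nested_pairs:
  "S_k_sigma V E k \<sigma> \<subseteq> (\<lambda>(C, D). {C, D}) ` nested_pairs V \<sigma>"
proof
  fix r assume r: "r \<in> S_k_sigma V E k \<sigma>"
  then obtain C D where r_eq: "r = {C, D}" and "sep_lt V E k C D"
    by (auto simp: S_k_sigma_def S_k_def)
  then have "C \<subseteq> V" "D \<subseteq> V" by (auto simp: sep_lt_def is_sep_def)
  moreover have "sep_le s (C, D) \<or> sep_le s (D, C)" if "s \<in> \<sigma>" for s
    using r that by (auto simp: S_k_sigma_def r_eq doubleton_eq_iff)
  ultimately show "r \<in> (\<lambda>(C, D). {C, D}) ` nested_pairs V \<sigma>"
    using r_eq by (force simp: nested_pairs_def)
qed

theorem proposition4p5:
  fixes V :: "'a set" and E :: "('a \<times> 'a) set" and k :: nat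
    and \<sigma> :: "('a set \<times> 'a set) set"
  assumes "graph V E"
    and "is_star V E \<sigma>"
    and "\<sigma> \<subseteq> oS_k V E k"
    and "finite \<sigma>"
    and "finite (interior_star V \<sigma>)"
  shows "finite (S_k_sigma V E k \<sigma>)"
proof -
  have "\<forall>s\<in>\<sigma>. fst s \<union> snd s = V"
    using assms(2) by (auto simp: is_star_def is_sep_def)
  then have "finite (nested_pairs V \<sigma>)"
    using assms(4,5) by (rule finite_nested_pairs)
  then show ?thesis
    by (rule finite_surj[OF _ S_k_sigma_subset_nested_pairs])
qed

end
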